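(* $\mathfrak{L}(BS(1,2)) \not\subseteq \mathsf{CF}$; that is, some language recognized by a $BS(1,2)$-automaton is not context-free.
   Context: For a group $G$ with identity $e$, a $G$-automaton is a tuple $(Q,\Sigma,G,\delta,q_0,Q_a)$ where $Q$ is a finite set of states, $\Sigma$ a finite input alphabet, $q_0\in Q$ the initial state, $Q_a\subseteq Q$ the accepting states, and $\delta$ assigns to each $(q,\sigma)\in Q\times(\Sigma\cup\{\varepsilon\})$ a finite set of pairs $(q',m)\in Q\times G$. The register holds an element of $G$, initially $e$; using a transition $(q',m)\in\delta(q,\sigma)$ the automaton reads $\sigma$ (or nothing), moves to $q'$ and replaces the register content $x$ by $xm$. A word is accepted if some computation reads it entirely and ends in an accepting state with register equal to $e$. $\mathfrak{L}(G)$ is the class of languages recognized by $G$-automata. $BS(1,2)$ is the Baumslag–Solitar group $\langle a,b\mid bab^{-1}=a^2\rangle$. $\mathsf{CF}$ is the class of context-free languages. *)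

theory Defs
  imports Complex_Main "HOL-Algebra.Group"
begin

text \<open>An automaton is given by a set of states Q, input alphabet Sig, a transition
function delta (None encodes the empty word epsilon, Some s the letter s),
an initial state q0 and a set of accepting states Qa.\<close>

definition is_G_automaton ::
  "('g, 'b) monoid_scheme \<Rightarrow> 'q set \<Rightarrow> 'a set \<Rightarrow> ('q \<Rightarrow> 'a option \<Rightarrow> ('q \<times> 'g) set)
   \<Rightarrow> 'q \<Rightarrow> 'q set \<Rightarrow> bool" where
  "is_G_automaton G Q Sig delta q0 Qa \<longleftrightarrow>
     finite Q \<and> finite Sig \<and> q0 \<in> Q \<and> Qa \<subseteq> Q \<and>
     (\<forall>q\<in>Q. \<forall>s. (s = None \<or> (\<exists>a\<in>Sig. s = Some a)) \<longrightarrow>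
        finite (delta q s) \<and> delta q s \<subseteq> Q \<times> carrier G)"

inductive runs ::
  "('g, 'b) monoid_scheme \<Rightarrow> ('q \<Rightarrow> 'a option \<Rightarrow> ('q \<times> 'g) set)
   \<Rightarrow> 'q \<Rightarrow> 'g \<Rightarrow> 'a list \<Rightarrow> 'q \<Rightarrow> 'g \<Rightarrow> bool"
  for G delta where
  run_nil: "runs G delta q x [] q x"
| run_eps: "(q', m) \<in> delta q None \<Longrightarrow> runs G delta q' (x \<otimes>\<^bsub>G\<^esub> m) w q'' y
            \<Longrightarrow> runs G delta q x w q'' y"
| run_read: "(q', m) \<in> delta q (Some s) \<Longrightarrow> runs G delta q' (x \<otimes>\<^bsub>G\<^esub> m) w q'' y
            \<Longrightarrow> runs G delta q x (s # w) q'' y"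

definition G_lang ::
  "('g, 'b) monoid_scheme \<Rightarrow> 'a set \<Rightarrow> ('q \<Rightarrow> 'a option \<Rightarrow> ('q \<times> 'g) set)
   \<Rightarrow> 'q \<Rightarrow> 'q set \<Rightarrow> 'a list set" where
  "G_lang G Sig delta q0 Qa =
     {w \<in> lists Sig. \<exists>q\<in>Qa. runs G delta q0 \<one>\<^bsub>G\<^esub> w q \<one>\<^bsub>G\<^esub>}"

text \<open>Standard faithful model: the group of affine maps x \<mapsto> 2^k x + r of the rationals,
with k an integer and r a dyadic rational; (k,r) encodes this map and the
product is composition.  The generator a is (0,1) (translation by 1), the generator
b is (1,0) (doubling); b a b^-1 = a^2 holds and BS(1,2) is isomorphic to this group.\<close>

definition BS12 :: "(int \<times> rat) monoid" where
  "BS12 = \<lparr> carrier = {(k, r). \<exists>(m::int) (n::nat). r = of_int m / 2 ^ n},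
            mult = (\<lambda>(k1, r1) (k2, r2). (k1 + k2, (2::rat) powi k1 * r2 + r1)),
            one = (0, 0) \<rparr>"

text \<open>A grammar is a set of productions (A, alpha) with A a nonterminal (Inl) and alpha
a word over nonterminals (Inl) and terminals (Inr).\<close>

inductive cfg_step :: "('n \<times> ('n + 't) list) set \<Rightarrow> ('n + 't) list \<Rightarrow> ('n + 't) list \<Rightarrow> bool"
  for P where
  "(A, alpha) \<in> P \<Longrightarrow> cfg_step P (u @ [Inl A] @ v) (u @ alpha @ v)"

definition cfg_lang :: "('n \<times> ('n + 't) list) set \<Rightarrow> 'n \<Rightarrow> 't list set" where
  "cfg_lang P S = {w. (cfg_step P)\<^sup>*\<^sup>* [Inl S] (map Inr w)}"

text \<open>Nonterminals are taken from nat, which is no restriction (finitely many are used).\<close>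
definition is_CFL :: "'t list set \<Rightarrow> bool" where
  "is_CFL L \<longleftrightarrow> (\<exists>(P :: (nat \<times> (nat + 't) list) set) S. finite P \<and> L = cfg_lang P S)"

end

theory Submission
  imports Defs
begin

text \<open>A BS(1,2)-automaton with three states accepts exactly the words 0^(2^n), so the lengths of
  its words are the powers of two. Pumping a parse tree of minimal size along a repeated
  nonterminal shows that a context-free language with infinitely many word lengths contains words
  of every length l + k p, for some p > 0 and all k. But no three powers of two are in arithmetic
  progression: 2^a + 2^c = 2 * 2^b with a < b < c would make 2^b divide 2^a.\<close>

section \<open>Parse trees\<close>

datatype ('n, 't) ptree = Leaf 't | Node 'n "('n, 't) ptree list"

fun pt_root :: "('n, 't) ptree \<Rightarrow> 'n + 't" where
  "pt_root (Leaf a) = Inr a"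
| "pt_root (Node A ts) = Inl A"

fun pt_yield :: "('n, 't) ptree \<Rightarrow> 't list" where
  "pt_yield (Leaf a) = [a]"
| "pt_yield (Node A ts) = concat (map pt_yield ts)"

fun pt_valid :: "('n \<times> ('n + 't) list) set \<Rightarrow> ('n, 't) ptree \<Rightarrow> bool" where
  "pt_valid P (Leaf a) = True"
| "pt_valid P (Node A ts) = ((A, map pt_root ts) \<in> P \<and> (\<forall>t\<in>set ts. pt_valid P t))"

fun pt_height :: "('n, 't) ptree \<Rightarrow> nat" where
  "pt_height (Leaf a) = 0"
| "pt_height (Node A ts) = Suc (Max (set (0 # map pt_height ts)))"

fun pt_size :: "('n, 't) ptree \<Rightarrow> nat" where
  "pt_size (Leaf a) = 1"
| "pt_size (Node A ts) = Suc (sum_list (map pt_size ts))"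

fun pt_subtrees :: "('n, 't) ptree \<Rightarrow> ('n, 't) ptree set" where
  "pt_subtrees (Leaf a) = {Leaf a}"
| "pt_subtrees (Node A ts) = insert (Node A ts) (\<Union> (pt_subtrees ` set ts))"

lemma derives_append:
  assumes "(cfg_step P)\<^sup>*\<^sup>* a b" and "(cfg_step P)\<^sup>*\<^sup>* c d"
  shows "(cfg_step P)\<^sup>*\<^sup>* (a @ c) (b @ d)"
proof -
  have in_context: "(cfg_step P)\<^sup>*\<^sup>* (x @ a @ y) (x @ b @ y)"
    if "(cfg_step P)\<^sup>*\<^sup>* a b" for x y a b
    using that
  proof (induction rule: rtranclp_induct)
    case (step b c)
    then obtain u A v \<alpha> where "b = u @ [Inl A] @ v" "c = u @ \<alpha> @ v" "(A, \<alpha>) \<in> P"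
      by (auto elim: cfg_step.cases)
    then have "cfg_step P (x @ b @ y) (x @ c @ y)"
      using cfg_step.intros[of A \<alpha> P "x @ u" "v @ y"] by simp
    with step.IH show ?case by (rule rtranclp.rtrancl_into_rtrancl)
  qed simp
  show ?thesis
    using in_context[OF assms(1), of "[]" c] in_context[OF assms(2), of b "[]"] by simp
qed

lemma pt_valid_derives:
  "pt_valid P t \<Longrightarrow> (cfg_step P)\<^sup>*\<^sup>* [pt_root t] (map Inr (pt_yield t))"
proof (induction t)
  case (Node A ts)
  have root_step: "cfg_step P [Inl A] (map pt_root ts)"
    using Node.prems cfg_step.intros[of A "map pt_root ts" P "[]" "[]"] by simp
  have "\<forall>t\<in>set ts. (cfg_step P)\<^sup>*\<^sup>* [pt_root t] (map Inr (pt_yield t))"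
    using Node by simp
  then have "(cfg_step P)\<^sup>*\<^sup>* (map pt_root ts) (map Inr (concat (map pt_yield ts)))"
    by (induction ts) (auto dest: derives_append)
  with root_step show ?case
    by (simp add: converse_rtranclp_into_rtranclp)
qed simp

lemma derives_forest:
  assumes "(cfg_step P)\<^sup>*\<^sup>* \<alpha> (map pt_root fs)" and "\<forall>t\<in>set fs. pt_valid P t"
  shows "\<exists>fs'. (\<forall>t\<in>set fs'. pt_valid P t) \<and> map pt_root fs' = \<alpha> \<and>
           concat (map pt_yield fs') = concat (map pt_yield fs)"
  using assms
proof (induction rule: converse_rtranclp_induct)
  case (step a b)
  then obtain fs' where fs': "\<forall>t\<in>set fs'. pt_valid P t" "map pt_root fs' = b"
    "concat (map pt_yield fs') = concat (map pt_yield fs)" by blast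
  from step.hyps(1) obtain u A v \<alpha> where a: "a = u @ [Inl A] @ v" and b: "b = u @ \<alpha> @ v"
    and "(A, \<alpha>) \<in> P"
    by (auto elim: cfg_step.cases)
  have "map pt_root fs' = u @ (\<alpha> @ v)"
    using fs'(2) b by simp
  then obtain f1 f23 where "fs' = f1 @ f23" "u = map pt_root f1" "\<alpha> @ v = map pt_root f23"
    unfolding map_eq_append_conv by blast
  moreover from this(3) obtain f2 f3 where "f23 = f2 @ f3" "\<alpha> = map pt_root f2" "v = map pt_root f3"
    by (metis map_eq_append_conv)
  ultimately show ?case
    using fs' \<open>(A, \<alpha>) \<in> P\<close> a
    by (intro exI[of _ "f1 @ [Node A f2] @ f3"]) auto
qed blast

lemma cfg_lang_iff_parse_tree:
  "w \<in> cfg_lang P S \<longleftrightarrow> (\<exists>t. pt_valid P t \<and> pt_root t = Inl S \<and> pt_yield t = w)"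
proof
  assume "w \<in> cfg_lang P S"
  then have "(cfg_step P)\<^sup>*\<^sup>* [Inl S] (map pt_root (map Leaf w))"
    by (simp add: cfg_lang_def comp_def)
  moreover have "\<forall>t\<in>set (map Leaf w). pt_valid P t"
    by simp
  moreover have "concat (map pt_yield (map Leaf w)) = w"
    by (induction w) simp_all
  ultimately obtain fs where
    "\<forall>t\<in>set fs. pt_valid P t" "map pt_root fs = [Inl S]" "concat (map pt_yield fs) = w"
    using derives_forest by metis
  then show "\<exists>t. pt_valid P t \<and> pt_root t = Inl S \<and> pt_yield t = w"
    by (auto simp: Cons_eq_map_conv)
next
  assume "\<exists>t. pt_valid P t \<and> pt_root t = Inl S \<and> pt_yield t = w"
  then show "w \<in> cfg_lang P S"
    using pt_valid_derives by (fastforce simp: cfg_lang_def)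
qed

lemma pt_valid_subtree: "s \<in> pt_subtrees t \<Longrightarrow> pt_valid P t \<Longrightarrow> pt_valid P s"
  by (induction t) auto

lemma pt_size_subtree: "s \<in> pt_subtrees t \<Longrightarrow> pt_size s \<le> pt_size t"
proof (induction t)
  case (Node A ts)
  show ?case
  proof (cases "s = Node A ts")
    case False
    then obtain c where "c \<in> set ts" "s \<in> pt_subtrees c"
      using Node.prems by auto
    with Node.IH show ?thesis
      using member_le_sum_list[of "pt_size c" "map pt_size ts"] by fastforce
  qed simp
qed simp

lemma pt_yield_length_le_power_height:
  assumes "pt_valid P t" and "\<forall>(A, \<alpha>)\<in>P. length \<alpha> \<le> K" and "0 < K"
  shows "length (pt_yield t) \<le> K ^ pt_height t"
  using assms(1)
proof (induction t)
  case (Node A ts)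
  define h where "h = Max (set (0 # map pt_height ts))"
  have "length (pt_yield (Node A ts)) = (\<Sum>c\<leftarrow>ts. length (pt_yield c))"
    by (simp add: length_concat comp_def)
  also have "\<dots> \<le> (\<Sum>c\<leftarrow>ts. K ^ h)"
  proof (rule sum_list_mono)
    fix c assume c: "c \<in> set ts"
    then have "length (pt_yield c) \<le> K ^ pt_height c"
      using Node by simp
    also have "\<dots> \<le> K ^ h"
      using c \<open>0 < K\<close> by (intro power_increasing) (auto simp: h_def)
    finally show "length (pt_yield c) \<le> K ^ h" .
  qed
  also have "\<dots> = length ts * K ^ h"
    by (simp add: sum_list_triv)
  also have "\<dots> \<le> K * K ^ h"
    using Node.prems assms(2) by fastforce
  finally show ?case
    by (simp add: h_def)
qed simp

text \<open>Pigeonhole along a path of maximal length.\<close>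
lemma pt_repeated_label:
  assumes "finite N" and "\<forall>A ts. Node A ts \<in> pt_subtrees t \<longrightarrow> A \<in> N"
    and "card N < pt_height t"
  shows "\<exists>B ts c s. Node B ts \<in> pt_subtrees t \<and> c \<in> set ts \<and> s \<in> pt_subtrees c \<and>
           pt_root s = Inl B"
  using assms
proof (induction t arbitrary: N)
  case (Node A ts)
  have "A \<in> N"
    using Node.prems(2) by simp
  then have "0 < card N"
    using Node.prems(1) card_gt_0_iff by blast
  moreover have "card N \<le> Max (set (0 # map pt_height ts))"
    using Node.prems(3) by simp
  ultimately obtain c where c: "c \<in> set ts" "card N \<le> pt_height c"
    by (auto simp: Max_ge_iff)
  show ?case
  proof (cases "\<exists>ts'. Node A ts' \<in> pt_subtrees c")
    case True
    then obtain ts' where "Node A ts' \<in> pt_subtrees c"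
      by blast
    with c(1) show ?thesis
      by (intro exI[of _ A] exI[of _ ts] exI[of _ c] exI[of _ "Node A ts'"]) simp
  next
    case False
    have "card (N - {A}) < pt_height c"
      using c(2) Node.prems(1) \<open>A \<in> N\<close> card_Diff1_less[of N A] by simp
    moreover have "\<forall>B ts'. Node B ts' \<in> pt_subtrees c \<longrightarrow> B \<in> N - {A}"
      using False Node.prems(2) c(1) by auto
    ultimately obtain B ts' c' s where "Node B ts' \<in> pt_subtrees c" "c' \<in> set ts'"
      "s \<in> pt_subtrees c'" "pt_root s = Inl B"
      using Node.IH[OF c(1), of "N - {A}"] Node.prems(1) by blast
    with c(1) show ?thesis
      by (intro exI[of _ B] exI[of _ ts'] exI[of _ c'] exI[of _ s]) auto
  qed
qed simp

datatype ('n, 't) pt_context =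
  Hole | In_Node 'n "('n, 't) ptree list" "('n, 't) pt_context" "('n, 't) ptree list"

fun ctx_fill :: "('n, 't) pt_context \<Rightarrow> ('n, 't) ptree \<Rightarrow> ('n, 't) ptree" where
  "ctx_fill Hole s = s"
| "ctx_fill (In_Node A l C r) s = Node A (l @ ctx_fill C s # r)"

lemma pt_subtree_imp_ctx_fill: "s \<in> pt_subtrees t \<Longrightarrow> \<exists>C. t = ctx_fill C s"
proof (induction t)
  case (Leaf a)
  then have "Leaf a = ctx_fill Hole s"
    by simp
  then show ?case ..
next
  case (Node A ts)
  show ?case
  proof (cases "s = Node A ts")
    case True
    then have "Node A ts = ctx_fill Hole s"
      by simp
    then show ?thesis ..
  next
    case False
    then obtain c where c: "c \<in> set ts" "s \<in> pt_subtrees c"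
      using Node.prems by auto
    then obtain C where "c = ctx_fill C s"
      using Node.IH by blast
    moreover obtain l r where "ts = l @ c # r"
      using c(1) split_list by metis
    ultimately have "Node A ts = ctx_fill (In_Node A l C r) s"
      by simp
    then show ?thesis ..
  qed
qed

lemma pt_yield_ctx_fill: "\<exists>u v. \<forall>s. pt_yield (ctx_fill C s) = u @ pt_yield s @ v"
proof (induction C)
  case Hole
  show ?case
    by (intro exI[of _ "[]"]) simp
next
  case (In_Node A l C r)
  then obtain u v where "\<forall>s. pt_yield (ctx_fill C s) = u @ pt_yield s @ v"
    by blast
  then show ?case
    by (intro exI[of _ "concat (map pt_yield l) @ u"] exI[of _ "v @ concat (map pt_yield r)"]) simp
qed

lemma pt_root_ctx_fill:
  "pt_root s' = pt_root s \<Longrightarrow> pt_root (ctx_fill C s') = pt_root (ctx_fill C s)"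
  by (cases C) simp_all

lemma pt_valid_ctx_fill:
  assumes "pt_valid P (ctx_fill C s)" and "pt_valid P s'" and "pt_root s' = pt_root s"
  shows "pt_valid P (ctx_fill C s')"
  using assms(1)
proof (induction C)
  case (In_Node A l C r)
  have "pt_root (ctx_fill C s') = pt_root (ctx_fill C s)"
    using assms(3) by (rule pt_root_ctx_fill)
  with In_Node show ?case
    by simp
qed (simp add: assms(2))

lemma pt_size_ctx_fill_less:
  "pt_size s' < pt_size s \<Longrightarrow> pt_size (ctx_fill C s') < pt_size (ctx_fill C s)"
  by (induction C) simp_all

lemma pt_valid_funpow_ctx_fill:
  assumes "pt_valid P (ctx_fill C s)" and "pt_valid P s" and "pt_root (ctx_fill C s) = pt_root s"
  shows "pt_valid P ((ctx_fill C ^^ k) s) \<and> pt_root ((ctx_fill C ^^ k) s) = pt_root s"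
proof (induction k)
  case (Suc k)
  then show ?case
    using assms pt_valid_ctx_fill[OF assms(1)] pt_root_ctx_fill[of "(ctx_fill C ^^ k) s" s C] by simp
qed (simp add: assms)

lemma length_pt_yield_funpow_ctx_fill:
  assumes "\<forall>s. pt_yield (ctx_fill C s) = u @ pt_yield s @ v"
  shows "length (pt_yield ((ctx_fill C ^^ k) s)) = length (pt_yield s) + k * (length u + length v)"
  using assms by (induction k) simp_all

lemma pt_valid_ctx_fill_arg: "pt_valid P (ctx_fill C s) \<Longrightarrow> pt_valid P s"
  by (induction C) simp_all

lemma cfg_lang_pump_loop:
  assumes valid: "pt_valid P (ctx_fill C1 (ctx_fill C2 s))"
    and root: "pt_root (ctx_fill C1 (ctx_fill C2 s)) = Inl S"
    and loop: "pt_root (ctx_fill C2 s) = pt_root s"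
    and uv: "\<forall>x. pt_yield (ctx_fill C2 x) = u @ pt_yield x @ v"
  shows "\<exists>l. \<forall>k. l + k * (length u + length v) \<in> length ` cfg_lang P S"
proof -
  obtain y z where yz: "\<forall>x. pt_yield (ctx_fill C1 x) = y @ pt_yield x @ z"
    using pt_yield_ctx_fill by blast
  have "pt_valid P (ctx_fill C2 s)" and "pt_valid P s"
    using valid pt_valid_ctx_fill_arg by blast+
  have "pt_yield (ctx_fill C1 ((ctx_fill C2 ^^ k) s)) \<in> cfg_lang P S" for k
  proof -
    have "pt_valid P ((ctx_fill C2 ^^ k) s)" and "pt_root ((ctx_fill C2 ^^ k) s) = pt_root s"
      using pt_valid_funpow_ctx_fill[OF \<open>pt_valid P (ctx_fill C2 s)\<close> \<open>pt_valid P s\<close> loop] by blast+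
    with loop have "pt_valid P (ctx_fill C1 ((ctx_fill C2 ^^ k) s))"
      using pt_valid_ctx_fill[OF valid] by simp
    moreover have "pt_root (ctx_fill C1 ((ctx_fill C2 ^^ k) s)) = Inl S"
      using root pt_root_ctx_fill[of "(ctx_fill C2 ^^ k) s" "ctx_fill C2 s"] loop
        \<open>pt_root ((ctx_fill C2 ^^ k) s) = pt_root s\<close> by simp
    ultimately show ?thesis
      unfolding cfg_lang_iff_parse_tree by blast
  qed
  moreover have "length (pt_yield (ctx_fill C1 ((ctx_fill C2 ^^ k) s)))
      = (length y + length z + length (pt_yield s)) + k * (length u + length v)" for k
    using yz length_pt_yield_funpow_ctx_fill[OF uv, of k s] by simp
  ultimately have "(length y + length z + length (pt_yield s)) + k * (length u + length v)
      \<in> length ` cfg_lang P S" for k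
    by (metis rev_image_eqI)
  then show ?thesis
    by blast
qed

section \<open>Pumping the lengths of a context-free language\<close>

lemma pt_loop_decomposition:
  assumes "finite P" and "pt_valid P t" and "card (fst ` P) < pt_height t"
  obtains C1 C2 s where "t = ctx_fill C1 (ctx_fill C2 s)" and "pt_root (ctx_fill C2 s) = pt_root s"
    and "pt_size s < pt_size (ctx_fill C2 s)"
proof -
  have "\<forall>A ts. Node A ts \<in> pt_subtrees t \<longrightarrow> A \<in> fst ` P"
    using assms(2) pt_valid_subtree by force
  then obtain B ts c s where B: "Node B ts \<in> pt_subtrees t" and c: "c \<in> set ts"
    and s: "s \<in> pt_subtrees c" "pt_root s = Inl B"
    using pt_repeated_label assms(1,3) by (metis finite_imageI)
  obtain C1 where C1: "t = ctx_fill C1 (Node B ts)"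
    using pt_subtree_imp_ctx_fill[OF B] by blast
  obtain C2 where C2: "Node B ts = ctx_fill C2 s"
    using pt_subtree_imp_ctx_fill[of s "Node B ts"] c s(1) by auto
  have "pt_size s < pt_size (Node B ts)"
    using pt_size_subtree[OF s(1)] member_le_sum_list[of "pt_size c" "map pt_size ts"] c by simp
  with C1 C2 s(2) show ?thesis
    by (metis pt_root.simps(2) that)
qed

lemma cfg_lang_length_pumping:
  fixes P :: "('n \<times> ('n + 't) list) set"
  assumes "finite P" and "w \<in> cfg_lang P S"
    and long: "Suc (\<Sum>(A, \<alpha>)\<in>P. length \<alpha>) ^ card (fst ` P) < length w"
  shows "\<exists>l p. 0 < p \<and> (\<forall>k. l + k * p \<in> length ` cfg_lang P S)"
proof -
  define K where "K = Suc (\<Sum>(A, \<alpha>)\<in>P. length \<alpha>)"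
  have K: "\<forall>(A, \<alpha>)\<in>P. length \<alpha> \<le> K"
    using \<open>finite P\<close> member_le_sum[of _ P "\<lambda>(A, \<alpha>). length \<alpha>"] by (fastforce simp: K_def)
  define derives_w where "derives_w t \<longleftrightarrow> pt_valid P t \<and> pt_root t = Inl S \<and> pt_yield t = w" for t
  obtain t where t: "derives_w t" and t_min: "\<And>t'. derives_w t' \<Longrightarrow> pt_size t \<le> pt_size t'"
    using ex_has_least_nat[of derives_w _ pt_size] assms(2)
    unfolding derives_w_def cfg_lang_iff_parse_tree by metis
  have "K ^ card (fst ` P) < K ^ pt_height t"
    using pt_yield_length_le_power_height[of P t K] t K long by (simp add: derives_w_def K_def)
  then have "card (fst ` P) < pt_height t"
    using nat_power_less_imp_less K_def by blast
  then obtain C1 C2 s where C: "t = ctx_fill C1 (ctx_fill C2 s)"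
    and loop: "pt_root (ctx_fill C2 s) = pt_root s" and smaller: "pt_size s < pt_size (ctx_fill C2 s)"
    using pt_loop_decomposition \<open>finite P\<close> t unfolding derives_w_def by metis
  obtain u v where uv: "\<forall>x. pt_yield (ctx_fill C2 x) = u @ pt_yield x @ v"
    using pt_yield_ctx_fill by blast
  have "0 < length u + length v"
  proof (rule ccontr)
    assume "\<not> 0 < length u + length v"
    then have "pt_yield (ctx_fill C1 s) = w"
      using t uv pt_yield_ctx_fill[of C1] unfolding C derives_w_def by force
    moreover have "pt_valid P (ctx_fill C1 s)"
      using t pt_valid_ctx_fill pt_valid_ctx_fill_arg loop unfolding derives_w_def C by metis
    moreover have "pt_root (ctx_fill C1 s) = Inl S"
      using t pt_root_ctx_fill[OF loop] unfolding derives_w_def C by simp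
    moreover have "pt_size (ctx_fill C1 s) < pt_size t"
      unfolding C using smaller by (rule pt_size_ctx_fill_less)
    ultimately show False
      using t_min[of "ctx_fill C1 s"] unfolding derives_w_def by simp
  qed
  moreover obtain l where "\<forall>k. l + k * (length u + length v) \<in> length ` cfg_lang P S"
    using cfg_lang_pump_loop[of P C1 C2 s S u v] t uv loop unfolding derives_w_def C by auto
  ultimately show ?thesis
    by blast
qed

lemma is_CFL_lengths_contain_arith_prog:
  assumes "is_CFL L" and "infinite (length ` L)"
  shows "\<exists>l p. 0 < p \<and> (\<forall>k. l + k * p \<in> length ` L)"
proof -
  obtain P :: "(nat \<times> (nat + 'a) list) set" and S where "finite P" and L: "L = cfg_lang P S"
    using assms(1) unfolding is_CFL_def by blast
  have "\<not> (\<forall>n\<in>length ` L. n \<le> Suc (\<Sum>(A, \<alpha>)\<in>P. length \<alpha>) ^ card (fst ` P))"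
    using assms(2) finite_nat_set_iff_bounded_le by blast
  then obtain w where "w \<in> L" and "Suc (\<Sum>(A, \<alpha>)\<in>P. length \<alpha>) ^ card (fst ` P) < length w"
    by auto
  then show ?thesis
    using cfg_lang_length_pumping[OF \<open>finite P\<close>] unfolding L by blast
qed

lemma powers_of_two_not_arith_prog:
  fixes l p :: nat
  assumes "0 < p"
  shows "\<exists>k. l + k * p \<notin> range ((^) 2)"
proof (rule ccontr)
  assume "\<not> ?thesis"
  then obtain a b c :: nat where a: "2 ^ a = l" and b: "2 ^ b = l + p" and c: "2 ^ c = l + 2 * p"
    by (metis mult_1 mult_zero_left add_0_right rangeE)
  have "(2::nat) ^ b < 2 ^ c"
    using b c \<open>0 < p\<close> by simp
  then have "(2::nat) ^ b dvd 2 ^ c"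
    by (simp add: le_imp_power_dvd)
  moreover have "(2::nat) ^ a = 2 * 2 ^ b - 2 ^ c"
    using a b c by simp
  ultimately have "(2::nat) ^ b dvd 2 ^ a"
    by (simp add: dvd_diff_nat)
  then have "(2::nat) ^ b \<le> 2 ^ a"
    by (simp add: dvd_imp_le)
  then show False
    using a b \<open>0 < p\<close> by simp
qed

section \<open>A BS(1,2)-automaton accepting the words of length a power of two\<close>

lemma BS12_mult: "(k1, r1) \<otimes>\<^bsub>BS12\<^esub> (k2, r2) = (k1 + k2, 2 powi k1 * r2 + r1)"
  by (simp add: BS12_def)

lemma BS12_one: "\<one>\<^bsub>BS12\<^esub> = (0, 0)"
  by (simp add: BS12_def)

lemma BS12_carrier_int: "(k, of_int m) \<in> carrier BS12"
  by (auto simp: BS12_def intro!: exI[of _ m] exI[of _ "0::nat"])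

text \<open>With b = (1, 0) and a = (0, 1): state 0 multiplies the register by b any number i of
  times and then by a, state 1 by b^-1 any number j of times, and state 2 by a^-1 for each letter
  read. So the register ends at b^i a b^-j a^-n = (i - j, 2^i - n 2^(i - j)), which is the
  identity iff i = j and n = 2^i.\<close>
definition pow2_delta :: "nat \<Rightarrow> nat option \<Rightarrow> (nat \<times> (int \<times> rat)) set" where
  "pow2_delta q s =
     (if q = 0 \<and> s = None then {(0, (1, 0)), (1, (0, 1))}
      else if q = 1 \<and> s = None then {(1, (-1, 0)), (2, (0, 0))}
      else if q = 2 \<and> s = Some 0 then {(2, (0, -1))}
      else {})"

lemma pow2_delta_is_G_automaton: "is_G_automaton BS12 {0, 1, 2} {0} pow2_delta 0 {2}"
proof -
  have "pow2_delta q s \<subseteq> {0, 1, 2} \<times> carrier BS12" for q s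
    using BS12_carrier_int[of _ 0] BS12_carrier_int[of _ 1] BS12_carrier_int[of _ "-1"]
    by (simp add: pow2_delta_def)
  then show ?thesis
    by (simp add: is_G_automaton_def pow2_delta_def)
qed

lemma runs_pow2_delta_from_2:
  assumes "runs BS12 pow2_delta 2 x w q y"
  shows "q = 2 \<and> y = x \<otimes>\<^bsub>BS12\<^esub> (0, - of_nat (length w))"
  using assms
proof (induction "2::nat" x w q y rule: runs.induct)
  case (run_nil x)
  then show ?case
    by (cases x) (simp add: BS12_mult)
next
  case (run_read q' m a x w q'' y)
  then have "q' = 2" and "m = (0, -1)"
    by (auto simp: pow2_delta_def split: if_splits)
  with run_read show ?case
    by (cases x) (simp add: BS12_mult algebra_simps)
qed (simp add: pow2_delta_def)

lemma runs_pow2_delta_from_1: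
  assumes "runs BS12 pow2_delta 1 x w 2 y"
  shows "\<exists>j::nat. y = x \<otimes>\<^bsub>BS12\<^esub> (- int j, 0) \<otimes>\<^bsub>BS12\<^esub> (0, - of_nat (length w))"
  using assms
proof (induction "1::nat" x w "2::nat" y rule: runs.induct)
  case (run_eps q' m x w y)
  then consider "q' = 1" "m = (-1, 0)" | "q' = 2" "m = (0, 0)"
    by (auto simp: pow2_delta_def split: if_splits)
  then show ?case
  proof cases
    case 1
    with run_eps obtain j :: nat
      where "y = x \<otimes>\<^bsub>BS12\<^esub> (-1, 0) \<otimes>\<^bsub>BS12\<^esub> (- int j, 0) \<otimes>\<^bsub>BS12\<^esub> (0, - of_nat (length w))"
      by auto
    then show ?thesis
      by (intro exI[of _ "Suc j"]) (cases x, simp add: BS12_mult algebra_simps)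
  next
    case 2
    with run_eps have "y = x \<otimes>\<^bsub>BS12\<^esub> (0, 0) \<otimes>\<^bsub>BS12\<^esub> (0, - of_nat (length w))"
      using runs_pow2_delta_from_2 by blast
    then show ?thesis
      by (intro exI[of _ 0]) (cases x, simp add: BS12_mult)
  qed
qed (simp_all add: pow2_delta_def)

lemma runs_pow2_delta_from_0:
  assumes "runs BS12 pow2_delta 0 x w 2 y"
  shows "\<exists>i j::nat. y = x \<otimes>\<^bsub>BS12\<^esub> (int i, 0) \<otimes>\<^bsub>BS12\<^esub> (0, 1) \<otimes>\<^bsub>BS12\<^esub> (- int j, 0)
                          \<otimes>\<^bsub>BS12\<^esub> (0, - of_nat (length w))"
  using assms
proof (induction "0::nat" x w "2::nat" y rule: runs.induct)
  case (run_eps q' m x w y)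
  then consider "q' = 0" "m = (1, 0)" | "q' = 1" "m = (0, 1)"
    by (auto simp: pow2_delta_def split: if_splits)
  then show ?case
  proof cases
    case 1
    with run_eps obtain i j :: nat where "y = x \<otimes>\<^bsub>BS12\<^esub> (1, 0) \<otimes>\<^bsub>BS12\<^esub> (int i, 0)
        \<otimes>\<^bsub>BS12\<^esub> (0, 1) \<otimes>\<^bsub>BS12\<^esub> (- int j, 0) \<otimes>\<^bsub>BS12\<^esub> (0, - of_nat (length w))"
      by auto
    then show ?thesis
      by (intro exI[of _ "Suc i"] exI[of _ j]) (cases x, simp add: BS12_mult algebra_simps)
  next
    case 2
    with run_eps obtain j :: nat where "y = x \<otimes>\<^bsub>BS12\<^esub> (0, 1) \<otimes>\<^bsub>BS12\<^esub> (- int j, 0)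
        \<otimes>\<^bsub>BS12\<^esub> (0, - of_nat (length w))"
      using runs_pow2_delta_from_1 by blast
    then show ?thesis
      by (intro exI[of _ 0] exI[of _ j]) (cases x, simp add: BS12_mult)
  qed
qed (simp_all add: pow2_delta_def)

lemma runs_pow2_delta_read:
  "runs BS12 pow2_delta 2 x (replicate n 0) 2 (x \<otimes>\<^bsub>BS12\<^esub> (0, - of_nat n))"
proof (induction n arbitrary: x)
  case 0
  then show ?case
    using runs.run_nil by (cases x) (simp add: BS12_mult)
next
  case (Suc n)
  have "x \<otimes>\<^bsub>BS12\<^esub> (0, -1) \<otimes>\<^bsub>BS12\<^esub> (0, - of_nat n) = x \<otimes>\<^bsub>BS12\<^esub> (0, - of_nat (Suc n))"
    by (cases x) (simp add: BS12_mult algebra_simps)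
  then show ?case
    using Suc.IH[of "x \<otimes>\<^bsub>BS12\<^esub> (0, -1)"]
    by (auto intro: runs.run_read simp: pow2_delta_def)
qed

lemma runs_pow2_delta_pop:
  "runs BS12 pow2_delta 2 (x \<otimes>\<^bsub>BS12\<^esub> (- int j, 0)) w 2 y \<Longrightarrow> runs BS12 pow2_delta 1 x w 2 y"
proof (induction j arbitrary: x)
  case 0
  then have "runs BS12 pow2_delta 2 (x \<otimes>\<^bsub>BS12\<^esub> (0, 0)) w 2 y"
    by simp
  then show ?case
    by (rule runs.run_eps[rotated]) (simp add: pow2_delta_def)
next
  case (Suc j)
  have "x \<otimes>\<^bsub>BS12\<^esub> (-1, 0) \<otimes>\<^bsub>BS12\<^esub> (- int j, 0) = x \<otimes>\<^bsub>BS12\<^esub> (- int (Suc j), 0)"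
    by (cases x) (simp add: BS12_mult)
  with Suc have "runs BS12 pow2_delta 1 (x \<otimes>\<^bsub>BS12\<^esub> (-1, 0)) w 2 y"
    by simp
  then show ?case
    by (rule runs.run_eps[rotated]) (simp add: pow2_delta_def)
qed

lemma runs_pow2_delta_push:
  "runs BS12 pow2_delta 1 (x \<otimes>\<^bsub>BS12\<^esub> (int i, 0) \<otimes>\<^bsub>BS12\<^esub> (0, 1)) w q y \<Longrightarrow>
   runs BS12 pow2_delta 0 x w q y"
proof (induction i arbitrary: x)
  case 0
  have "x \<otimes>\<^bsub>BS12\<^esub> (0, 0) = x"
    by (cases x) (simp add: BS12_mult)
  with 0 have "runs BS12 pow2_delta 1 (x \<otimes>\<^bsub>BS12\<^esub> (0, 1)) w q y"
    by simp
  then show ?case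
    by (rule runs.run_eps[rotated]) (simp add: pow2_delta_def)
next
  case (Suc i)
  have "x \<otimes>\<^bsub>BS12\<^esub> (1, 0) \<otimes>\<^bsub>BS12\<^esub> (int i, 0) = x \<otimes>\<^bsub>BS12\<^esub> (int (Suc i), 0)"
    by (cases x) (simp add: BS12_mult)
  with Suc have "runs BS12 pow2_delta 0 (x \<otimes>\<^bsub>BS12\<^esub> (1, 0)) w q y"
    by simp
  then show ?case
    by (rule runs.run_eps[rotated]) (simp add: pow2_delta_def)
qed

lemma BS12_pow2_register:
  "(0, 0) \<otimes>\<^bsub>BS12\<^esub> (int i, 0) \<otimes>\<^bsub>BS12\<^esub> (0, 1) \<otimes>\<^bsub>BS12\<^esub> (- int j, 0) \<otimes>\<^bsub>BS12\<^esub> (0, - of_nat n)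
     = (int i - int j, 2 ^ i - of_nat n * 2 powi (int i - int j))"
  by (simp add: BS12_mult)

lemma pow2_delta_lang_lengths: "length ` G_lang BS12 {0} pow2_delta 0 {2} = range ((^) 2)"
proof (intro equalityI subsetI)
  fix n assume "n \<in> length ` G_lang BS12 {0} pow2_delta 0 {2}"
  then obtain w where "n = length w" and "runs BS12 pow2_delta 0 (0, 0) w 2 (0, 0)"
    by (auto simp: G_lang_def BS12_one)
  then obtain i j :: nat where "(0, 0) = (0, 0) \<otimes>\<^bsub>BS12\<^esub> (int i, 0) \<otimes>\<^bsub>BS12\<^esub> (0, 1)
      \<otimes>\<^bsub>BS12\<^esub> (- int j, 0) \<otimes>\<^bsub>BS12\<^esub> (0, - of_nat n)"
    using runs_pow2_delta_from_0 by blast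
  then have "(of_nat n :: rat) = of_nat (2 ^ i)"
    unfolding BS12_pow2_register by auto
  then show "n \<in> range ((^) 2)"
    unfolding of_nat_eq_iff by blast
next
  fix n assume "n \<in> range ((^) (2::nat))"
  then obtain i where n: "n = 2 ^ i"
    by blast
  define x where "x = (0, 0) \<otimes>\<^bsub>BS12\<^esub> (int i, 0) \<otimes>\<^bsub>BS12\<^esub> (0, 1) \<otimes>\<^bsub>BS12\<^esub> (- int i, 0)"
  have "x \<otimes>\<^bsub>BS12\<^esub> (0, - of_nat n) = (0, 0)"
    unfolding x_def BS12_pow2_register n by simp
  then have "runs BS12 pow2_delta 2 x (replicate n 0) 2 (0, 0)"
    using runs_pow2_delta_read[of x n] by simp
  then have "runs BS12 pow2_delta 0 (0, 0) (replicate n 0) 2 (0, 0)"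
    unfolding x_def by (intro runs_pow2_delta_push runs_pow2_delta_pop)
  then show "n \<in> length ` G_lang BS12 {0} pow2_delta 0 {2}"
    by (force simp: G_lang_def BS12_one)
qed

theorem theorem3p13:
  shows "\<exists>(Q :: nat set) (Sig :: nat set)
            (delta :: nat \<Rightarrow> nat option \<Rightarrow> (nat \<times> (int \<times> rat)) set) q0 Qa.
           is_G_automaton BS12 Q Sig delta q0 Qa \<and>
           \<not> is_CFL (G_lang BS12 Sig delta q0 Qa)"
proof (intro exI conjI)
  show "is_G_automaton BS12 {0, 1, 2} {0} pow2_delta 0 {2}"
    by (rule pow2_delta_is_G_automaton)
  show "\<not> is_CFL (G_lang BS12 {0} pow2_delta 0 {2})"
  proof
    assume cfl: "is_CFL (G_lang BS12 {0} pow2_delta 0 {2})"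
    have "infinite (length ` G_lang BS12 {0} pow2_delta 0 {2})"
      unfolding pow2_delta_lang_lengths
      using finite_imageD[of "(^) (2::nat)" UNIV] by (auto simp: inj_on_def)
    from is_CFL_lengths_contain_arith_prog[OF cfl this] obtain l p
      where "0 < p" and "\<forall>k. l + k * p \<in> length ` G_lang BS12 {0} pow2_delta 0 {2}"
      by blast
    then show False
      using powers_of_two_not_arith_prog unfolding pow2_delta_lang_lengths by blast
  qed
qed

end
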